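(* (i) $H^\infty$ acts transitively on $\Sigma$; (ii) $H^\infty[3]$ acts transitively on $\Sigma[3]$; (iii) for each $\alpha\in\Sigma$, the set of elements of $\Sigma$ orthogonal to $\alpha$ equals $g(\Sigma[3])$ for some $g\in H^\infty$; (iv) for each $\alpha\in\Sigma$, the stabilizer of $\alpha$ in $H^\infty$ contains a subgroup conjugate (in $H^\infty$) to $H^\infty[3]$, where $H^\infty[3]$ is regarded as acting on $\mathbb{R}^4$ by fixing the first coordinate.
   Context: Let $\tau=(1+\sqrt5)/2$, $\tau'=(1-\sqrt5)/2$. Let $\Delta\subset\mathbb{R}^4$ be the set of 120 vectors consisting of: the 8 vectors obtained from $(\pm1,0,0,0)$ by permuting coordinates; the 16 vectors $\frac12(\pm1,\pm1,\pm1,\pm1)$; and the 96 vectors obtained from $\frac12(0,\pm1,\pm\tau',\pm\tau)$ (all sign choices) by even permutations of the coordinates; $\Delta'$ is its image under $\tau\leftrightarrow\tau'$ in each coordinate. For a unit vector $a$, $r_a(x)=x-2(x\cdot a)a$; $H^\infty$ is the group generated by $r_a$, $a\in\Delta\cup\Delta'$, and $\Sigma=H^\infty(\Delta\cup\Delta')$. Let $V=\{x\in\mathbb{R}^4:x_1=0\}$, $\Delta[3]=\Delta\cap V$, $\Delta[3]'=\Delta'\cap V$, $H^\infty[3]$ the group of orthogonal maps of $V$ generated by $r_a$, $a\in\Delta[3]\cup\Delta[3]'$, and $\Sigma[3]=H^\infty[3](\Delta[3]\cup\Delta[3]')$. *)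

theory Defs
  imports "HOL-Analysis.Analysis" "HOL-Combinatorics.Permutations"
begin

definition tau :: real where "tau = (1 + sqrt 5) / 2"
definition tau' :: real where "tau' = (1 - sqrt 5) / 2"

text \<open>The 120-element root set built from parameters t (playing tau) and t' (playing tau').
  Delta = Delta_gen tau tau'; Delta' (swap tau and tau' in each coordinate) = Delta_gen tau' tau.\<close>
definition Delta_gen :: "real \<Rightarrow> real \<Rightarrow> (real^4) set" where
  "Delta_gen t t' =
     {x. \<exists>i s. s \<in> {-1, 1} \<and> x = (\<chi> j. if j = i then s else 0)}
   \<union> {x. \<exists>s1 s2 s3 s4. {s1, s2, s3, s4} \<subseteq> {-1, 1} \<and>
          x = vector [s1 / 2, s2 / 2, s3 / 2, s4 / 2]}
   \<union> {x. \<exists>p s1 s2 s3. p permutes (UNIV :: 4 set) \<and> evenperm p \<and> {s1, s2, s3} \<subseteq> {-1, 1} \<and>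
          x = (\<chi> j. (vector [0, s1 / 2, s2 * t' / 2, s3 * t / 2] :: real^4) $ p j)}"

definition Delta :: "(real^4) set" where "Delta = Delta_gen tau tau'"
definition Delta' :: "(real^4) set" where "Delta' = Delta_gen tau' tau"

definition refl :: "real^4 \<Rightarrow> real^4 \<Rightarrow> real^4" where
  "refl a x = x - (2 * (x \<bullet> a)) *\<^sub>R a"

inductive_set refl_group :: "(real^4) set \<Rightarrow> (real^4 \<Rightarrow> real^4) set" for A where
  rg_id: "id \<in> refl_group A"
| rg_step: "a \<in> A \<Longrightarrow> g \<in> refl_group A \<Longrightarrow> refl a \<circ> g \<in> refl_group A"
| rg_step_inv: "a \<in> A \<Longrightarrow> g \<in> refl_group A \<Longrightarrow> inv (refl a) \<circ> g \<in> refl_group A"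

definition Hinf :: "(real^4 \<Rightarrow> real^4) set" where "Hinf = refl_group (Delta \<union> Delta')"

definition Sigma :: "(real^4) set" where "Sigma = {g a | g a. g \<in> Hinf \<and> a \<in> Delta \<union> Delta'}"

definition V :: "(real^4) set" where "V = {x. x $ 1 = 0}"

definition Delta3 :: "(real^4) set" where "Delta3 = Delta \<inter> V"
definition Delta3' :: "(real^4) set" where "Delta3' = Delta' \<inter> V"

text \<open>H^infty[3], realised on R^4 (each generator fixes the first coordinate, so this is the
  group on V extended by fixing the first coordinate).\<close>
definition Hinf3 :: "(real^4 \<Rightarrow> real^4) set" where "Hinf3 = refl_group (Delta3 \<union> Delta3')"

definition Sigma3 :: "(real^4) set" where "Sigma3 = {g a | g a. g \<in> Hinf3 \<and> a \<in> Delta3 \<union> Delta3'}"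

end

(*
  Every element of Sigma has the form g e\<^sub>1 with g \<in> H\<^sup>\<infinity>: all roots lie in the orbit of e\<^sub>1,
  because two unit vectors with inner product 1/2 whose difference is a root are exchanged by
  the reflection in that difference.  This gives (i), and (iv) follows since H\<^sup>\<infinity>[3] fixes e\<^sub>1.

  For (ii) and (iii) the point is that Sigma \<inter> V = Sigma[3] is the H\<^sup>\<infinity>[3]-orbit of e\<^sub>2.
  Reflections in roots preserve the unit vectors with coordinates in \<int>[\<tau>][1/2], so Sigma
  consists of such vectors.  Conversely, let x \<in> V be such a vector and y = 2\<^sup>k x \<in> \<int>[\<tau>]\<^sup>4
  with k minimal.  Reducing modulo 2, i.e. in \<int>[\<tau>]/2 = \<bbbF>\<^sub>4, the condition y \<bullet> y \<equiv> 0 (mod 4)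
  forces y \<equiv> \<lambda> c (mod 2) for a unit \<lambda> and c = 2r with r a root of Delta[3] or Delta[3]';
  choosing the signs of the coordinates of r so that y \<bullet> c \<equiv> 2 \<lambda> (mod 4), the reflection in r
  lowers k.  At k = 0 only the vectors \<plusminus>e\<^sub>j remain, and they are reached from e\<^sub>2 explicitly.
*)
theory Submission
  imports Defs
begin

section \<open>The golden ratio and \<open>\<int>[\<tau>]\<close>\<close>

lemma tau_squared: "tau\<^sup>2 = tau + 1"
  unfolding tau_def by (simp add: power2_eq_square field_simps)

lemma tau'_eq: "tau' = 1 - tau"
  unfolding tau_def tau'_def by (simp add: field_simps)

lemma tau_plus_tau': "tau + tau' = 1"
  by (simp add: tau'_eq)

lemma square_eq_five_times_square_int: "(m::int)\<^sup>2 = 5 * n\<^sup>2 \<Longrightarrow> n = 0"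
proof (induction "nat \<bar>n\<bar>" arbitrary: m n rule: less_induct)
  case less
  show "n = 0"
  proof (rule ccontr)
    assume "n \<noteq> 0"
    have "prime (5::int)" by simp
    moreover have "5 dvd m\<^sup>2" using less.prems by simp
    ultimately have "5 dvd m" using prime_dvd_power by blast
    then obtain k where m: "m = 5 * k" ..
    have nk: "n\<^sup>2 = 5 * k\<^sup>2" using less.prems by (simp add: m power_mult_distrib)
    have "0 < n\<^sup>2" using \<open>n \<noteq> 0\<close> by simp
    then have "k\<^sup>2 < n\<^sup>2" using nk by linarith
    then have "\<bar>k\<bar> < \<bar>n\<bar>" using abs_le_square_iff[of n k] by linarith
    then have "nat \<bar>k\<bar> < nat \<bar>n\<bar>" by simp
    then have "k = 0" using less.hyps nk by blast
    then show False using nk \<open>n \<noteq> 0\<close> by simp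
  qed
qed

definition ztau :: "int \<Rightarrow> int \<Rightarrow> real" where
  "ztau a b = of_int a + of_int b * tau"

lemma ztau_eq_0_iff: "ztau a b = 0 \<longleftrightarrow> a = 0 \<and> b = 0"
proof
  assume "ztau a b = 0"
  then have "of_int (2 * a + b) = - of_int b * sqrt 5"
    unfolding ztau_def tau_def by (simp add: field_simps)
  then have "of_int ((2 * a + b)\<^sup>2) = (of_int (5 * b\<^sup>2) :: real)"
    by (simp add: power_mult_distrib)
  then have "b = 0"
    by (intro square_eq_five_times_square_int[of "2 * a + b"]) (simp only: of_int_eq_iff)
  with \<open>ztau a b = 0\<close> show "a = 0 \<and> b = 0" by (simp add: ztau_def)
qed (simp add: ztau_def)

lemma ztau_add: "ztau a b + ztau c d = ztau (a + c) (b + d)"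
  and ztau_diff: "ztau a b - ztau c d = ztau (a - c) (b - d)"
  unfolding ztau_def by (simp_all add: algebra_simps)

lemma ztau_mult: "ztau a b * ztau c d = ztau (a * c + b * d) (a * d + b * c + b * d)"
proof -
  have "ztau a b * ztau c d = of_int (a * c) + of_int (a * d + b * c) * tau + of_int (b * d) * tau\<^sup>2"
    by (simp add: ztau_def power2_eq_square algebra_simps)
  then show ?thesis by (simp add: tau_squared ztau_def algebra_simps)
qed

lemma ztau_eq_iff: "ztau a b = ztau c d \<longleftrightarrow> a = c \<and> b = d"
  using ztau_eq_0_iff[of "a - c" "b - d"] by (auto simp: ztau_diff[symmetric])

definition Ztau :: "real set" where
  "Ztau = {x. \<exists>a b. x = ztau a b}"

lemma ztau_in_Ztau [simp]: "ztau a b \<in> Ztau"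
  unfolding Ztau_def by blast

lemma zero_in_Ztau [simp]: "0 \<in> Ztau"
  using ztau_in_Ztau[of 0 0] by (simp add: ztau_def)

lemma of_int_in_Ztau [simp]: "of_int n \<in> Ztau"
  using ztau_in_Ztau[of n 0] by (simp add: ztau_def)

lemma tau_in_Ztau [simp]: "tau \<in> Ztau" and tau'_in_Ztau [simp]: "tau' \<in> Ztau"
  using ztau_in_Ztau[of 0 1] ztau_in_Ztau[of 1 "-1"] by (simp_all add: ztau_def tau'_eq)

lemma Ztau_add: "x \<in> Ztau \<Longrightarrow> y \<in> Ztau \<Longrightarrow> x + y \<in> Ztau"
  and Ztau_diff: "x \<in> Ztau \<Longrightarrow> y \<in> Ztau \<Longrightarrow> x - y \<in> Ztau"
  and Ztau_mult: "x \<in> Ztau \<Longrightarrow> y \<in> Ztau \<Longrightarrow> x * y \<in> Ztau"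
  unfolding Ztau_def mem_Collect_eq by (metis ztau_add, metis ztau_diff, metis ztau_mult)

lemma sign_in_Ztau: "s \<in> {-1, 1} \<Longrightarrow> s \<in> Ztau"
  using of_int_in_Ztau[of 1] of_int_in_Ztau[of "-1"] by auto

lemma ztau_div_in_Ztau:
  assumes "m dvd a" "m dvd b"
  shows "ztau a b / of_int m \<in> Ztau"
proof -
  obtain a' b' where ab: "a = m * a'" "b = m * b'" using assms by (elim dvdE)
  show ?thesis
  proof (cases "m = 0")
    case True
    then show ?thesis by simp
  next
    case False
    then have "ztau a b / of_int m = ztau a' b'" using ab by (simp add: ztau_def field_simps)
    then show ?thesis by simp
  qed
qed

section \<open>Reflections and the groups they generate\<close>

lemma inner_4: "(x::real^4) \<bullet> y = x$1 * y$1 + x$2 * y$2 + x$3 * y$3 + x$4 * y$4"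
  by (simp add: inner_vec_def sum_4)

lemma vector_4_nth [simp]:
  "(vector [a, b, c, d] :: 'a::zero^4) $ 1 = a" "(vector [a, b, c, d] :: 'a^4) $ 2 = b"
  "(vector [a, b, c, d] :: 'a^4) $ 3 = c" "(vector [a, b, c, d] :: 'a^4) $ 4 = d"
  unfolding vector_def by simp_all

lemma vec_eq_4: "(x::real^4) = y \<longleftrightarrow> x$1 = y$1 \<and> x$2 = y$2 \<and> x$3 = y$3 \<and> x$4 = y$4"
  by (simp add: vec_eq_iff forall_4)

lemma inner_permute:
  fixes v w :: "real^4"
  assumes "p permutes UNIV"
  shows "(\<chi> j. v $ p j) \<bullet> (\<chi> j. w $ p j) = v \<bullet> w"
  using sum.permute[OF assms, of "\<lambda>i. v $ i * w $ i"] by (simp add: inner_vec_def comp_def)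

lemma refl_nth: "refl a x $ i = x $ i - 2 * (x \<bullet> a) * a $ i"
  unfolding refl_def by simp

lemma refl_involution: "a \<bullet> a = 1 \<Longrightarrow> refl a (refl a x) = x"
  unfolding refl_def by (simp add: inner_diff_left algebra_simps)

lemma inner_refl: "a \<bullet> a = 1 \<Longrightarrow> refl a x \<bullet> refl a y = x \<bullet> y"
  unfolding refl_def by (simp add: inner_diff_left inner_diff_right inner_commute algebra_simps)

lemma bij_refl: "a \<bullet> a = 1 \<Longrightarrow> bij (refl a)"
  by (rule o_bij[of "refl a"]) (simp_all add: fun_eq_iff refl_involution)

lemma inv_refl: "a \<bullet> a = 1 \<Longrightarrow> inv (refl a) = refl a"
  by (rule inv_unique_comp) (simp_all add: fun_eq_iff refl_involution)

lemma refl_self: "a \<bullet> a = 1 \<Longrightarrow> refl a a = - a"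
  unfolding refl_def by (simp add: scaleR_2)

lemma refl_orthogonal: "x \<bullet> a = 0 \<Longrightarrow> refl a x = x"
  unfolding refl_def by simp

lemma refl_diff_swap:
  assumes "a \<bullet> a = 1" "b \<bullet> b = 1" "a \<bullet> b = 1/2"
  shows "refl (a - b) a = b"
proof -
  have "2 * (a \<bullet> (a - b)) = 1" using assms by (simp add: inner_diff_right)
  then show ?thesis unfolding refl_def by simp
qed

lemma refl_group_refl: "a \<in> A \<Longrightarrow> refl a \<in> refl_group A"
  using rg_step[OF _ rg_id, of a A] by simp

lemma refl_group_comp: "g \<in> refl_group A \<Longrightarrow> h \<in> refl_group A \<Longrightarrow> g \<circ> h \<in> refl_group A"
  by (induction rule: refl_group.induct) (auto simp: o_assoc[symmetric] intro: refl_group.intros)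

lemma refl_orbit_closed:
  assumes "y \<in> (\<lambda>g. g b) ` refl_group A" "a \<in> A"
  shows "refl a y \<in> (\<lambda>g. g b) ` refl_group A"
proof -
  obtain g where "g \<in> refl_group A" "y = g b" using assms(1) by blast
  then have "refl a \<circ> g \<in> refl_group A" "refl a y = (refl a \<circ> g) b"
    using assms(2) by (simp_all add: rg_step)
  then show ?thesis by blast
qed

lemma refl_orbit_step:
  assumes "y \<in> (\<lambda>g. g b) ` refl_group A" "y - x \<in> A"
    "y \<bullet> y = 1" "x \<bullet> x = 1" "y \<bullet> x = 1/2"
  shows "x \<in> (\<lambda>g. g b) ` refl_group A"
  using refl_orbit_closed[OF assms(1,2)] by (simp add: refl_diff_swap assms(3-5))

lemma refl_group_mono: "g \<in> refl_group A \<Longrightarrow> A \<subseteq> B \<Longrightarrow> g \<in> refl_group B"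
  by (induction rule: refl_group.induct) (auto intro: refl_group.intros)

context
  fixes A :: "(real^4) set"
  assumes unit: "\<And>a. a \<in> A \<Longrightarrow> a \<bullet> a = 1"
begin

lemma refl_group_step_induct [consumes 1, case_names id step]:
  assumes "g \<in> refl_group A" "P id" "\<And>a g. a \<in> A \<Longrightarrow> g \<in> refl_group A \<Longrightarrow> P g \<Longrightarrow> P (refl a \<circ> g)"
  shows "P g"
  using assms(1)
proof induction
  case rg_id
  show ?case by (fact assms(2))
next
  case (rg_step a g)
  then show ?case by (rule assms(3))
next
  case (rg_step_inv a g)
  then show ?case using assms(3) by (simp only: inv_refl unit)
qed

lemma refl_group_preserves:
  assumes "g \<in> refl_group A" "\<And>a x. a \<in> A \<Longrightarrow> x \<in> S \<Longrightarrow> refl a x \<in> S" "x \<in> S"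
  shows "g x \<in> S"
  using assms(1,3) by (induction rule: refl_group_step_induct) (auto intro: assms(2))

lemma refl_group_inner: "g \<in> refl_group A \<Longrightarrow> g x \<bullet> g y = x \<bullet> y"
  by (induction rule: refl_group_step_induct) (simp_all add: inner_refl unit)

lemma refl_group_inv: "g \<in> refl_group A \<Longrightarrow> bij g \<and> inv g \<in> refl_group A"
proof (induction rule: refl_group_step_induct)
  case id
  show ?case using rg_id by (simp only: inv_id bij_id simp_thms)
next
  case (step a g)
  have a: "bij (refl a)" "inv (refl a) = refl a" using step(1) by (simp_all add: bij_refl inv_refl unit)
  then have "inv (refl a \<circ> g) = inv g \<circ> refl a" using step(3) by (simp add: o_inv_distrib)
  then show ?case
    using step a by (simp add: bij_comp refl_group_comp refl_group_refl del: comp_apply)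
qed

lemma refl_group_transitive:
  assumes "x \<in> (\<lambda>g. g b) ` refl_group A" "y \<in> (\<lambda>g. g b) ` refl_group A"
  shows "\<exists>g\<in>refl_group A. g x = y"
proof -
  obtain g h where gh: "g \<in> refl_group A" "h \<in> refl_group A" "x = g b" "y = h b"
    using assms by blast
  then have "h \<circ> inv g \<in> refl_group A" "(h \<circ> inv g) x = y"
    using refl_group_inv[OF gh(1)] by (simp_all add: refl_group_comp bij_is_inj)
  then show ?thesis by blast
qed

end

definition Ztau_lattice :: "nat \<Rightarrow> (real^4) set" where
  "Ztau_lattice k = {x. \<forall>i. 2 ^ k * x $ i \<in> Ztau}"

lemma refl_Ztau_lattice:
  assumes "x \<in> Ztau_lattice k" "a \<in> Ztau_lattice 1"
  shows "refl a x \<in> Ztau_lattice (Suc k)"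
proof -
  have "2 ^ Suc k * refl a x $ i = 2 * (2 ^ k * x $ i)
      - ((2^k * x$1) * (2 * a$1) + (2^k * x$2) * (2 * a$2) + (2^k * x$3) * (2 * a$3)
         + (2^k * x$4) * (2 * a$4)) * (2 * a$i)" for i
    by (simp add: refl_nth inner_4 algebra_simps)
  moreover have "2 * y \<in> Ztau" if "y \<in> Ztau" for y
    using Ztau_add[OF that that] by simp
  ultimately show ?thesis
    using assms unfolding Ztau_lattice_def by (simp add: Ztau_add Ztau_diff Ztau_mult)
qed

section \<open>The roots\<close>

lemma Delta_gen_cases [consumes 1, case_names axis half golden]:
  assumes "x \<in> Delta_gen t t'"
  obtains (axis) i s where "s \<in> {-1, 1}" "x = axis i s"
  | (half) s1 s2 s3 s4 where "{s1, s2, s3, s4} \<subseteq> {-1, 1}" "x = vector [s1 / 2, s2 / 2, s3 / 2, s4 / 2]"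
  | (golden) p s1 s2 s3 where "p permutes UNIV" "evenperm p" "{s1, s2, s3} \<subseteq> {-1, 1}"
      "x = (\<chi> j. (vector [0, s1 / 2, s2 * t' / 2, s3 * t / 2] :: real^4) $ p j)"
proof -
  have "(\<exists>i s. s \<in> {-1, 1} \<and> x = axis i s)
    \<or> (\<exists>s1 s2 s3 s4. {s1, s2, s3, s4} \<subseteq> {-1, 1} \<and> x = vector [s1 / 2, s2 / 2, s3 / 2, s4 / 2])
    \<or> (\<exists>p s1 s2 s3. p permutes UNIV \<and> evenperm p \<and> {s1, s2, s3} \<subseteq> {-1, 1} \<and>
          x = (\<chi> j. (vector [0, s1 / 2, s2 * t' / 2, s3 * t / 2] :: real^4) $ p j))"
    using assms unfolding Delta_gen_def axis_def by (simp only: Un_iff mem_Collect_eq disj_assoc)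
  then show thesis by (elim disjE exE conjE) (rule that; assumption)+
qed

lemma axis_in_Delta_gen: "s \<in> {-1, 1} \<Longrightarrow> axis i s \<in> Delta_gen t t'"
  unfolding Delta_gen_def axis_def by blast

lemma half_in_Delta_gen:
  assumes "\<forall>j. \<bar>x $ j\<bar> = 1/2"
  shows "x \<in> Delta_gen t t'"
proof -
  have "2 * x $ j = -1 \<or> 2 * x $ j = 1" for j using assms[rule_format, of j] by arith
  then have "2 * x $ j \<in> {-1, 1}" for j by blast
  then have "{2 * x $ 1, 2 * x $ 2, 2 * x $ 3, 2 * x $ 4} \<subseteq> {-1, 1}" by blast
  moreover have "x = vector [2 * x $ 1 / 2, 2 * x $ 2 / 2, 2 * x $ 3 / 2, 2 * x $ 4 / 2]"
    by (simp add: vec_eq_iff forall_4 vector_def)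
  ultimately show ?thesis unfolding Delta_gen_def by blast
qed

lemma golden_in_Delta_gen:
  "p permutes UNIV \<Longrightarrow> evenperm p \<Longrightarrow> {s1, s2, s3} \<subseteq> {-1, 1} \<Longrightarrow>
    (\<chi> j. (vector [0, s1 / 2, s2 * t' / 2, s3 * t / 2] :: real^4) $ p j) \<in> Delta_gen t t'"
  unfolding Delta_gen_def by blast

lemma Delta_gen_unit:
  assumes "t\<^sup>2 + t'\<^sup>2 = 3" "x \<in> Delta_gen t t'"
  shows "x \<bullet> x = 1"
  using assms(2)
proof (cases rule: Delta_gen_cases)
  case (axis i s)
  then show ?thesis by (auto simp: inner_axis_axis)
next
  case (half s1 s2 s3 s4)
  then have "s1 * s1 = 1" "s2 * s2 = 1" "s3 * s3 = 1" "s4 * s4 = 1" by auto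
  then show ?thesis using half(2) by (simp add: inner_4 field_simps)
next
  case (golden p s1 s2 s3)
  let ?v = "vector [0, s1 / 2, s2 * t' / 2, s3 * t / 2] :: real^4"
  have "?v \<bullet> ?v = (1 + t'\<^sup>2 + t\<^sup>2) / 4"
    using golden(3) by (auto simp: inner_4 power2_eq_square field_simps)
  also have "\<dots> = 1" using assms(1) by simp
  finally have "?v \<bullet> ?v = 1" .
  then show ?thesis by (simp only: golden(4) inner_permute[OF golden(1)])
qed

lemma Delta_Delta': "Delta \<union> Delta' = Delta_gen tau tau' \<union> Delta_gen tau' tau"
  by (simp add: Delta_def Delta'_def)

lemma golden_tau_pair:
  assumes "(t = tau \<and> t' = tau') \<or> (t = tau' \<and> t' = tau)"
  shows "t\<^sup>2 + t'\<^sup>2 = 3" "t + t' = 1" "t \<in> Ztau" "t' \<in> Ztau"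
proof -
  have "tau\<^sup>2 + tau'\<^sup>2 = 3"
    using tau_squared by (simp add: tau'_eq power2_eq_square algebra_simps)
  then show "t\<^sup>2 + t'\<^sup>2 = 3" "t + t' = 1" "t \<in> Ztau" "t' \<in> Ztau"
    using assms tau_plus_tau' by (auto simp: algebra_simps)
qed

lemma roots_cases:
  assumes "a \<in> Delta \<union> Delta'"
  obtains t t' where "t\<^sup>2 + t'\<^sup>2 = 3" "t + t' = 1" "t \<in> Ztau" "t' \<in> Ztau"
    "Delta_gen t t' \<subseteq> Delta \<union> Delta'" "a \<in> Delta_gen t t'"
proof -
  from assms consider "a \<in> Delta_gen tau tau'" | "a \<in> Delta_gen tau' tau"
    unfolding Delta_Delta' by blast
  then show thesis
  proof cases
    case 1
    then show thesis using that golden_tau_pair[of tau tau'] by (simp add: Delta_Delta')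
  next
    case 2
    then show thesis using that golden_tau_pair[of tau' tau] by (simp add: Delta_Delta')
  qed
qed

lemma root_unit: "a \<in> Delta \<union> Delta' \<Longrightarrow> a \<bullet> a = 1"
  by (elim roots_cases) (simp add: Delta_gen_unit)

lemma half_in_roots: "\<forall>j. \<bar>x $ j\<bar> = 1/2 \<Longrightarrow> x \<in> Delta \<union> Delta'"
  unfolding Delta_def by (simp add: half_in_Delta_gen)

lemma axis_in_roots: "s \<in> {-1, 1} \<Longrightarrow> axis i s \<in> Delta \<union> Delta'"
  unfolding Delta_def by (simp add: axis_in_Delta_gen)

lemma root_Ztau_lattice:
  assumes "a \<in> Delta \<union> Delta'"
  shows "a \<in> Ztau_lattice 1"
proof -
  obtain t t' where t: "t \<in> Ztau" "t' \<in> Ztau" and a: "a \<in> Delta_gen t t'"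
    using assms by (rule roots_cases)
  from a show ?thesis
  proof (cases rule: Delta_gen_cases)
    case (axis i s)
    have "2 * s \<in> Ztau"
      using Ztau_mult[OF of_int_in_Ztau[of 2] sign_in_Ztau[OF axis(1)]] by simp
    then show ?thesis by (simp add: Ztau_lattice_def axis(2) axis_def)
  next
    case (half s1 s2 s3 s4)
    then have "s1 \<in> Ztau" "s2 \<in> Ztau" "s3 \<in> Ztau" "s4 \<in> Ztau" by (simp_all add: sign_in_Ztau)
    then show ?thesis by (simp add: Ztau_lattice_def forall_4 half(2))
  next
    case (golden p s1 s2 s3)
    then have entries: "s1 \<in> Ztau" "s2 * t' \<in> Ztau" "s3 * t \<in> Ztau"
      using t by (simp_all add: sign_in_Ztau Ztau_mult)
    have "\<forall>i. 2 * (vector [0, s1 / 2, s2 * t' / 2, s3 * t / 2] :: real^4) $ i \<in> Ztau"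
      unfolding forall_4 by (simp add: entries)
    then show ?thesis by (simp add: Ztau_lattice_def golden(4))
  qed
qed

section \<open>\<open>Sigma\<close> is the orbit of \<open>e\<^sub>1\<close>\<close>

abbreviation e1_orbit :: "(real^4) set" where
  "e1_orbit \<equiv> (\<lambda>g. g (axis 1 1)) ` Hinf"

lemma e1_in_e1_orbit: "axis 1 1 \<in> e1_orbit"
  unfolding Hinf_def by (rule image_eqI[where x = id]) (simp_all add: rg_id)

lemma e1_orbit_refl: "y \<in> e1_orbit \<Longrightarrow> a \<in> Delta \<union> Delta' \<Longrightarrow> refl a y \<in> e1_orbit"
  unfolding Hinf_def by (rule refl_orbit_closed)

lemma e1_orbit_step:
  "y \<in> e1_orbit \<Longrightarrow> y - x \<in> Delta \<union> Delta' \<Longrightarrow> y \<bullet> y = 1 \<Longrightarrow> x \<bullet> x = 1 \<Longrightarrow> y \<bullet> x = 1/2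
    \<Longrightarrow> x \<in> e1_orbit"
  unfolding Hinf_def by (rule refl_orbit_step)

lemma half_in_e1_orbit:
  assumes "\<forall>j. \<bar>x $ j\<bar> = 1/2"
  shows "x \<in> e1_orbit"
proof -
  have pos: "y \<in> e1_orbit" if "\<forall>j. \<bar>y $ j\<bar> = 1/2" "y $ 1 = 1/2" for y
  proof (rule e1_orbit_step[OF e1_in_e1_orbit])
    have "\<bar>(axis 1 1 - y) $ j\<bar> = 1/2" for j
      using that by (cases "j = 1") (simp_all add: axis_def)
    then have "\<forall>j. \<bar>(axis 1 1 - y) $ j\<bar> = 1/2" ..
    then show "axis 1 1 - y \<in> Delta \<union> Delta'" by (rule half_in_roots)
    show "y \<bullet> y = 1" using root_unit half_in_roots that(1) by blast
  qed (simp_all add: inner_axis_axis inner_axis' that(2))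
  show ?thesis
  proof (cases "x $ 1 = 1/2")
    case False
    have "x $ 1 = - 1/2" using assms[rule_format, of 1] False by arith
    then have "(- x) $ 1 = 1/2" by simp
    with assms have "- x \<in> e1_orbit" by (intro pos) simp_all
    then have "refl x (- x) \<in> e1_orbit"
      by (rule e1_orbit_refl) (rule half_in_roots[OF assms])
    moreover have "refl x (- x) = x"
      using refl_self[OF root_unit[OF half_in_roots[OF assms]]] by (simp add: refl_def)
    ultimately show ?thesis by simp
  qed (use assms pos in blast)
qed

lemma axis_in_e1_orbit:
  assumes "s \<in> {-1, 1}"
  shows "axis i s \<in> e1_orbit"
proof -
  let ?h = "(\<chi> j. 1/2) :: real^4"
  have unit: "axis i 1 \<bullet> (axis i 1 :: real^4) = 1" by (simp add: inner_axis_axis)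
  have "\<forall>j. \<bar>?h $ j\<bar> = 1/2" by simp
  then have h: "?h \<in> e1_orbit" "?h \<bullet> ?h = 1"
    by (rule half_in_e1_orbit, rule root_unit[OF half_in_roots])
  have "\<bar>(?h - axis i 1) $ j\<bar> = 1/2" for j by (cases "j = i") (simp_all add: axis_def)
  then have "?h - axis i 1 \<in> Delta \<union> Delta'" by (intro half_in_roots) blast
  then have pos: "axis i 1 \<in> e1_orbit"
    by (rule e1_orbit_step[OF h(1)]) (simp_all add: unit h(2) inner_axis)
  have "refl (axis i 1) (axis i 1) \<in> e1_orbit"
    by (rule e1_orbit_refl[OF pos axis_in_roots]) simp
  moreover have "refl (axis i 1) (axis i 1) = axis i (-1)"
    unfolding refl_self[OF unit] by (simp add: vec_eq_iff axis_def)
  ultimately show ?thesis using pos assms by auto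
qed

text \<open>The witness is the half root \<open>h\<close> with the signs of \<open>x\<close>: \<open>h \<bullet> x = 1/2\<close>, and since
  \<open>1 - t' = t\<close>, \<open>h - x\<close> is again a golden root, permuted by \<open>(1 2)(3 4) \<circ> p\<close>.\<close>
lemma golden_in_e1_orbit:
  assumes t: "t + t' = 1" "t\<^sup>2 + t'\<^sup>2 = 3" "Delta_gen t t' \<subseteq> Delta \<union> Delta'"
    and p: "p permutes UNIV" "evenperm p" and s: "{s1, s2, s3} \<subseteq> {-1, 1}"
  shows "(\<chi> j. (vector [0, s1 / 2, s2 * t' / 2, s3 * t / 2] :: real^4) $ p j) \<in> e1_orbit"
    (is "?x \<in> _")
proof -
  let ?v = "vector [0, s1 / 2, s2 * t' / 2, s3 * t / 2] :: real^4"
  let ?w = "vector [1/2, s1 / 2, s2 / 2, s3 / 2] :: real^4"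
  let ?u = "vector [0, 1/2, s3 * t' / 2, s2 * t / 2] :: real^4"
  let ?\<sigma> = "Transposition.transpose 1 2 \<circ> Transposition.transpose 3 4 :: 4 \<Rightarrow> 4"
  let ?h = "\<chi> j. ?w $ p j"
  have "\<forall>i. \<bar>?w $ i\<bar> = 1/2"
    unfolding forall_4 using s by auto
  then have "\<forall>j. \<bar>?h $ j\<bar> = 1/2" by simp
  then have h: "?h \<in> e1_orbit" "?h \<in> Delta \<union> Delta'"
    by (rule half_in_e1_orbit, rule half_in_roots)
  have x: "?x \<in> Delta_gen t t'" by (rule golden_in_Delta_gen[OF p s])
  have "?w \<bullet> ?v = (s1 * s1 + (s2 * s2) * t' + (s3 * s3) * t) / 4"
    by (simp add: inner_4 field_simps)
  also have "\<dots> = 1/2" using s t(1) by (auto simp: algebra_simps)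
  finally have hx: "?h \<bullet> ?x = 1/2" by (simp add: inner_permute[OF p(1)])
  have t': "t' = 1 - t" using t(1) by simp
  have "\<forall>i. ?w $ i - ?v $ i = ?u $ ?\<sigma> i"
    unfolding forall_4 t' by (simp add: field_simps)
  then have "?h - ?x = (\<chi> j. ?u $ (?\<sigma> \<circ> p) j)" by (simp add: vec_eq_iff)
  moreover have "?\<sigma> \<circ> p permutes UNIV" "evenperm (?\<sigma> \<circ> p)"
  proof -
    have "?\<sigma> permutes UNIV" by (intro permutes_compose permutes_swap_id) simp_all
    then show "?\<sigma> \<circ> p permutes UNIV" by (rule permutes_compose[OF p(1)])
    have "evenperm ?\<sigma>" by (simp add: evenperm_comp permutation_swap_id evenperm_swap)
    moreover have "permutation ?\<sigma>" "permutation p"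
      using \<open>?\<sigma> permutes UNIV\<close> p(1) by (auto simp: permutation_permutes)
    ultimately show "evenperm (?\<sigma> \<circ> p)" using p(2) by (simp add: evenperm_comp)
  qed
  moreover have "{1, s3, s2} \<subseteq> {-1, 1}" using s by auto
  ultimately have "?h - ?x \<in> Delta_gen t t'"
    using golden_in_Delta_gen[of "?\<sigma> \<circ> p" 1 s3 s2 t' t] by simp
  then show ?thesis
    by (rule e1_orbit_step[OF h(1) subsetD[OF t(3)]])
      (simp_all add: root_unit[OF h(2)] Delta_gen_unit[OF t(2) x] hx)
qed

lemma root_in_e1_orbit:
  assumes "a \<in> Delta \<union> Delta'"
  shows "a \<in> e1_orbit"
proof -
  obtain t t' where t: "t\<^sup>2 + t'\<^sup>2 = 3" "t + t' = 1" "Delta_gen t t' \<subseteq> Delta \<union> Delta'"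
    and a: "a \<in> Delta_gen t t'"
    using assms by (rule roots_cases)
  from a show ?thesis
  proof (cases rule: Delta_gen_cases)
    case (axis i s)
    then show ?thesis by (simp add: axis_in_e1_orbit)
  next
    case (half s1 s2 s3 s4)
    then have "\<forall>j. \<bar>a $ j\<bar> = 1/2" unfolding forall_4 by auto
    then show ?thesis by (rule half_in_e1_orbit)
  next
    case (golden p s1 s2 s3)
    then show ?thesis using golden_in_e1_orbit[OF t(2,1,3)] by simp
  qed
qed

lemma Hinf_comp: "g \<in> Hinf \<Longrightarrow> h \<in> Hinf \<Longrightarrow> g \<circ> h \<in> Hinf"
  unfolding Hinf_def by (rule refl_group_comp)

lemma Hinf_inv: "g \<in> Hinf \<Longrightarrow> bij g \<and> inv g \<in> Hinf"
  unfolding Hinf_def by (rule refl_group_inv[OF root_unit])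

lemma Sigma_eq_e1_orbit: "Sigma = e1_orbit"
proof
  show "Sigma \<subseteq> e1_orbit"
  proof
    fix x assume "x \<in> Sigma"
    then obtain g a where g: "g \<in> Hinf" "a \<in> Delta \<union> Delta'" "x = g a"
      unfolding Sigma_def by blast
    obtain h where h: "h \<in> Hinf" "a = h (axis 1 1)"
      using root_in_e1_orbit[OF g(2)] by blast
    have "g \<circ> h \<in> Hinf" using g(1) h(1) by (rule Hinf_comp)
    then show "x \<in> e1_orbit" using g(3) h(2) by (intro image_eqI[where x = "g \<circ> h"]) simp_all
  qed
  show "e1_orbit \<subseteq> Sigma"
    unfolding Sigma_def using axis_in_roots[of 1 1] by blast
qed

lemma Hinf_inner: "g \<in> Hinf \<Longrightarrow> g x \<bullet> g y = x \<bullet> y"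
  unfolding Hinf_def by (rule refl_group_inner[OF root_unit])

lemma Sigma_Hinf_closed:
  assumes "g \<in> Hinf" "x \<in> Sigma"
  shows "g x \<in> Sigma"
proof -
  obtain h where "h \<in> Hinf" "x = h (axis 1 1)" using assms(2) unfolding Sigma_eq_e1_orbit by blast
  then show ?thesis
    unfolding Sigma_eq_e1_orbit using Hinf_comp[OF assms(1)] by (auto intro!: image_eqI[where x = "g \<circ> h"])
qed

lemma Sigma_unit_dyadic:
  assumes "x \<in> Sigma"
  shows "x \<bullet> x = 1" "\<exists>k. x \<in> Ztau_lattice k"
proof -
  obtain g where g: "g \<in> Hinf" "x = g (axis 1 1)"
    using assms unfolding Sigma_eq_e1_orbit by blast
  then show "x \<bullet> x = 1" by (simp add: Hinf_inner inner_axis_axis)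
  have "axis 1 1 \<in> Ztau_lattice 0"
    using sign_in_Ztau[of 1] by (simp add: Ztau_lattice_def axis_def)
  then have "g (axis 1 1) \<in> {x. \<exists>k. x \<in> Ztau_lattice k}"
    by (intro refl_group_preserves[OF root_unit g(1)[unfolded Hinf_def]])
      (use refl_Ztau_lattice root_Ztau_lattice in blast)+
  then show "\<exists>k. x \<in> Ztau_lattice k" using g(2) by simp
qed

section \<open>Vectors of \<open>V\<close> with coordinates in \<open>\<int>[\<tau>][1/2]\<close>\<close>

definition zvec :: "nat \<Rightarrow> int \<Rightarrow> int \<Rightarrow> int \<Rightarrow> int \<Rightarrow> int \<Rightarrow> int \<Rightarrow> real^4" where
  "zvec k a2 b2 a3 b3 a4 b4 = vector [0, ztau a2 b2 / 2 ^ k, ztau a3 b3 / 2 ^ k, ztau a4 b4 / 2 ^ k]"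

lemma zvec_nth [simp]:
  "zvec k a2 b2 a3 b3 a4 b4 $ 1 = 0"
  "zvec k a2 b2 a3 b3 a4 b4 $ 2 = ztau a2 b2 / 2 ^ k"
  "zvec k a2 b2 a3 b3 a4 b4 $ 3 = ztau a3 b3 / 2 ^ k"
  "zvec k a2 b2 a3 b3 a4 b4 $ 4 = ztau a4 b4 / 2 ^ k"
  unfolding zvec_def by simp_all

lemma zvec_in_V: "zvec k a2 b2 a3 b3 a4 b4 \<in> V"
  by (simp add: V_def)

lemma zvec_in_Ztau_lattice_dvd:
  assumes "2 ^ m dvd a2" "2 ^ m dvd b2" "2 ^ m dvd a3" "2 ^ m dvd b3" "2 ^ m dvd a4" "2 ^ m dvd b4"
  shows "zvec (k + m) a2 b2 a3 b3 a4 b4 \<in> Ztau_lattice k"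
proof -
  have "2 ^ k * (ztau a b / 2 ^ (k + m)) = ztau a b / of_int (2 ^ m)" for a b
    by (simp add: power_add)
  moreover have "ztau a b / 2 ^ m \<in> Ztau" if "2 ^ m dvd a" "2 ^ m dvd b" for a b
    using ztau_div_in_Ztau[OF that] by simp
  ultimately show ?thesis using assms by (simp add: Ztau_lattice_def forall_4)
qed

lemma V_Ztau_lattice_zvec:
  assumes "x \<in> V" "x \<in> Ztau_lattice k"
  obtains a2 b2 a3 b3 a4 b4 where "x = zvec k a2 b2 a3 b3 a4 b4"
proof -
  obtain a2 b2 a3 b3 a4 b4 where "2 ^ k * x $ 2 = ztau a2 b2" "2 ^ k * x $ 3 = ztau a3 b3"
    "2 ^ k * x $ 4 = ztau a4 b4"
  proof -
    have "\<forall>i. \<exists>a b. 2 ^ k * x $ i = ztau a b"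
      using assms(2) by (simp add: Ztau_lattice_def Ztau_def)
    then show thesis using that by meson
  qed
  then have "x = zvec k a2 b2 a3 b3 a4 b4" using assms(1) by (simp add: V_def vec_eq_4 field_simps)
  then show thesis by (rule that)
qed

lemma zvec_inner_self:
  "zvec k a2 b2 a3 b3 a4 b4 \<bullet> zvec k a2 b2 a3 b3 a4 b4 =
    ztau (a2 * a2 + b2 * b2 + a3 * a3 + b3 * b3 + a4 * a4 + b4 * b4)
         (2 * a2 * b2 + b2 * b2 + 2 * a3 * b3 + b3 * b3 + 2 * a4 * b4 + b4 * b4) / 4 ^ k"
proof -
  have "zvec k a2 b2 a3 b3 a4 b4 \<bullet> zvec k a2 b2 a3 b3 a4 b4
      = (ztau a2 b2 * ztau a2 b2 + ztau a3 b3 * ztau a3 b3 + ztau a4 b4 * ztau a4 b4) / (2 ^ k * 2 ^ k)"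
    by (simp add: inner_4 field_simps)
  also have "(2::real) ^ k * 2 ^ k = 4 ^ k" by (simp flip: power_mult_distrib)
  finally show ?thesis by (simp add: ztau_mult ztau_add algebra_simps)
qed

text \<open>With \<open>c = (c\<^sub>j + d\<^sub>j \<tau>)\<^sub>j\<close> and \<open>y = (a\<^sub>j + b\<^sub>j \<tau>)\<^sub>j\<close>, this is
  \<open>refl (c/2) (y/2\<^sup>k) = (2 y - (y \<bullet> c) c) / 2\<^sup>k\<^sup>+\<^sup>1\<close> with \<open>y \<bullet> c = S0 + S1 \<tau>\<close>.\<close>
lemma refl_zvec:
  assumes "S0 = a2 * c2 + b2 * d2 + a3 * c3 + b3 * d3 + a4 * c4 + b4 * d4"
    and "S1 = a2 * d2 + b2 * c2 + b2 * d2 + a3 * d3 + b3 * c3 + b3 * d3 + a4 * d4 + b4 * c4 + b4 * d4"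
  shows "refl (zvec 1 c2 d2 c3 d3 c4 d4) (zvec k a2 b2 a3 b3 a4 b4) =
    zvec (Suc k) (2 * a2 - S0 * c2 - S1 * d2) (2 * b2 - S0 * d2 - S1 * c2 - S1 * d2)
      (2 * a3 - S0 * c3 - S1 * d3) (2 * b3 - S0 * d3 - S1 * c3 - S1 * d3)
      (2 * a4 - S0 * c4 - S1 * d4) (2 * b4 - S0 * d4 - S1 * c4 - S1 * d4)"
proof -
  have "zvec k a2 b2 a3 b3 a4 b4 \<bullet> zvec 1 c2 d2 c3 d3 c4 d4
      = (ztau a2 b2 * ztau c2 d2 + ztau a3 b3 * ztau c3 d3 + ztau a4 b4 * ztau c4 d4) / (2 ^ k * 2)"
    by (simp add: inner_4 field_simps)
  also have "\<dots> = ztau S0 S1 / 2 ^ Suc k"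
    by (simp add: assms ztau_mult ztau_add algebra_simps)
  finally have inner: "zvec k a2 b2 a3 b3 a4 b4 \<bullet> zvec 1 c2 d2 c3 d3 c4 d4 = ztau S0 S1 / 2 ^ Suc k" .
  have entry: "ztau a b / 2 ^ k - 2 * (ztau S0 S1 / 2 ^ Suc k) * (ztau c d / 2)
      = ztau (2 * a - S0 * c - S1 * d) (2 * b - S0 * d - S1 * c - S1 * d) / 2 ^ Suc k" for a b c d
  proof -
    have "ztau a b / 2 ^ k - 2 * (ztau S0 S1 / 2 ^ Suc k) * (ztau c d / 2)
        = (ztau (2 * a) (2 * b) - ztau S0 S1 * ztau c d) / 2 ^ Suc k"
      by (simp add: ztau_def field_simps)
    then show ?thesis by (simp add: ztau_mult ztau_diff algebra_simps)
  qed
  show ?thesis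
    unfolding vec_eq_4 refl_nth inner using entry[of _ _ c2 d2] entry[of _ _ c3 d3] entry[of _ _ c4 d4]
    by simp
qed

section \<open>Lowering the denominator by a reflection\<close>

lemma square_sums_mod_4:
  fixes a b :: int
  shows "(a * a + b * b) mod 4 = (if even a then if even b then 0 else 1 else if even b then 1 else 2)
    \<and> (2 * a * b + b * b) mod 4 = (if even b then 0 else if even a then 1 else 3)"
proof -
  have residues: "\<forall>r \<in> {0, 1, 2, 3}. \<forall>s \<in> {0, 1, 2, 3::int}.
      (r * r + s * s) mod 4 = (if even r then if even s then 0 else 1 else if even s then 1 else 2)
    \<and> (2 * r * s + s * s) mod 4 = (if even s then 0 else if even r then 1 else 3)"
    by simp
  have "a mod 4 \<in> {0, 1, 2, 3}" "b mod 4 \<in> {0, 1, 2, 3}" by auto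
  moreover have "even (a mod 4) \<longleftrightarrow> even a" "even (b mod 4) \<longleftrightarrow> even b" by presburger+
  moreover have "(a * a + b * b) mod 4 = ((a mod 4) * (a mod 4) + (b mod 4) * (b mod 4)) mod 4"
    "(2 * a * b + b * b) mod 4 = (2 * (a mod 4) * (b mod 4) + (b mod 4) * (b mod 4)) mod 4"
    by (intro mod_add_cong mod_mult_cong; simp)+
  ultimately show ?thesis using residues by simp
qed

text \<open>For \<open>y = (a\<^sub>j + b\<^sub>j \<tau>)\<^sub>j\<close> the hypotheses say \<open>y \<bullet> y \<equiv> 0 (mod 4)\<close> and \<open>y \<not>\<equiv> 0 (mod 2)\<close>;
  the conclusion says \<open>y \<equiv> \<lambda> (1, \<tau>\<^sup>2, \<tau>)\<close> or \<open>y \<equiv> \<lambda> (1, \<tau>, \<tau>\<^sup>2) (mod 2)\<close> with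
  \<open>\<lambda> = a\<^sub>2 + b\<^sub>2 \<tau> \<not>\<equiv> 0\<close>.\<close>
lemma norm_dvd_4_residues_mod_2:
  fixes a2 b2 a3 b3 a4 b4 :: int
  assumes "4 dvd a2 * a2 + b2 * b2 + a3 * a3 + b3 * b3 + a4 * a4 + b4 * b4"
    and "4 dvd 2 * a2 * b2 + b2 * b2 + 2 * a3 * b3 + b3 * b3 + 2 * a4 * b4 + b4 * b4"
    and "\<not> (even a2 \<and> even b2 \<and> even a3 \<and> even b3 \<and> even a4 \<and> even b4)"
  shows "(odd a2 \<or> odd b2) \<and>
    (even (a3 - a2 - b2) \<and> even (b3 - a2) \<and> even (a4 - b2) \<and> even (b4 - a2 - b2) \<or>
     even (a3 - b2) \<and> even (b3 - a2 - b2) \<and> even (a4 - a2 - b2) \<and> even (b4 - a2))"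
proof -
  have sum: "4 dvd x + y + z \<longleftrightarrow> 4 dvd x mod 4 + y mod 4 + z mod 4" for x y z :: int
    by presburger
  have "4 dvd (a2 * a2 + b2 * b2) mod 4 + (a3 * a3 + b3 * b3) mod 4 + (a4 * a4 + b4 * b4) mod 4"
    using assms(1) sum[of "a2 * a2 + b2 * b2" "a3 * a3 + b3 * b3" "a4 * a4 + b4 * b4"]
    by (simp add: add.assoc)
  moreover have "4 dvd (2 * a2 * b2 + b2 * b2) mod 4 + (2 * a3 * b3 + b3 * b3) mod 4
      + (2 * a4 * b4 + b4 * b4) mod 4"
    using assms(2) sum[of "2 * a2 * b2 + b2 * b2" "2 * a3 * b3 + b3 * b3" "2 * a4 * b4 + b4 * b4"]
    by (simp add: add.assoc)
  moreover have "even (a2 * a2 + b2 * b2 + a3 * a3 + b3 * b3 + a4 * a4 + b4 * b4)"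
    "even (2 * a2 * b2 + b2 * b2 + 2 * a3 * b3 + b3 * b3 + 2 * a4 * b4 + b4 * b4)"
    by (rule dvd_trans[OF _ assms(1)] dvd_trans[OF _ assms(2)], simp)+
  then have "even a4 \<longleftrightarrow> (even a2 \<longleftrightarrow> even a3)" "even b4 \<longleftrightarrow> (even b2 \<longleftrightarrow> even b3)"
    by auto
  ultimately show ?thesis
    using assms(3) unfolding square_sums_mod_4[THEN conjunct1] square_sums_mod_4[THEN conjunct2]
    by (cases "even a2"; cases "even b2"; cases "even a3"; cases "even b3") simp_all
qed

text \<open>In \<open>\<int>[\<tau>]\<close>, \<open>y\<^sub>j \<equiv> \<lambda> c\<^sub>j (mod 2)\<close> and \<open>y \<bullet> c \<equiv> 2 \<lambda> (mod 4)\<close> imply \<open>2 y\<^sub>j \<equiv> (y \<bullet> c) c\<^sub>j (mod 4)\<close>;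
  in coordinates \<open>y\<^sub>j = a + b \<tau>\<close>, \<open>c\<^sub>j = c + d \<tau>\<close>, \<open>\<lambda> = la + lb \<tau>\<close> and \<open>y \<bullet> c = S0 + S1 \<tau>\<close>.\<close>
lemma reflection_entry_dvd_4:
  fixes a b c d la lb S0 S1 :: int
  assumes "even (a - (la * c + lb * d))" "even (b - (la * d + lb * c + lb * d))"
    and "4 dvd S0 - 2 * la" "4 dvd S1 - 2 * lb"
  shows "4 dvd 2 * a - S0 * c - S1 * d" "4 dvd 2 * b - S0 * d - S1 * c - S1 * d"
proof -
  obtain u where "a - (la * c + lb * d) = 2 * u" using assms(1) by (rule evenE)
  moreover obtain v where "b - (la * d + lb * c + lb * d) = 2 * v" using assms(2) by (rule evenE)
  moreover obtain m where "S0 - 2 * la = 4 * m" using assms(3) by (rule dvdE)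
  moreover obtain n where "S1 - 2 * lb = 4 * n" using assms(4) by (rule dvdE)
  ultimately have "2 * a - S0 * c - S1 * d = 4 * (u - m * c - n * d)"
    "2 * b - S0 * d - S1 * c - S1 * d = 4 * (v - m * d - n * (c + d))"
    by (simp_all add: algebra_simps)
  then show "4 dvd 2 * a - S0 * c - S1 * d" "4 dvd 2 * b - S0 * d - S1 * c - S1 * d" by simp_all
qed

lemma refl_zvec_lowers_level:
  fixes a2 b2 a3 b3 a4 b4 c2 d2 c3 d3 c4 d4 la lb :: int
  defines "S0 \<equiv> a2 * c2 + b2 * d2 + a3 * c3 + b3 * d3 + a4 * c4 + b4 * d4"
    and "S1 \<equiv> a2 * d2 + b2 * c2 + b2 * d2 + a3 * d3 + b3 * c3 + b3 * d3 + a4 * d4 + b4 * c4 + b4 * d4"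
  assumes "even (a2 - (la * c2 + lb * d2))" "even (b2 - (la * d2 + lb * c2 + lb * d2))"
    and "even (a3 - (la * c3 + lb * d3))" "even (b3 - (la * d3 + lb * c3 + lb * d3))"
    and "even (a4 - (la * c4 + lb * d4))" "even (b4 - (la * d4 + lb * c4 + lb * d4))"
    and "4 dvd S0 - 2 * la" "4 dvd S1 - 2 * lb"
  shows "refl (zvec 1 c2 d2 c3 d3 c4 d4) (zvec (Suc k) a2 b2 a3 b3 a4 b4) \<in> Ztau_lattice k"
proof -
  have "refl (zvec 1 c2 d2 c3 d3 c4 d4) (zvec (Suc k) a2 b2 a3 b3 a4 b4) =
    zvec (k + 2) (2 * a2 - S0 * c2 - S1 * d2) (2 * b2 - S0 * d2 - S1 * c2 - S1 * d2)
      (2 * a3 - S0 * c3 - S1 * d3) (2 * b3 - S0 * d3 - S1 * c3 - S1 * d3)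
      (2 * a4 - S0 * c4 - S1 * d4) (2 * b4 - S0 * d4 - S1 * c4 - S1 * d4)"
    using refl_zvec[OF meta_eq_to_obj_eq[OF S0_def] meta_eq_to_obj_eq[OF S1_def]] by simp
  then show ?thesis
    using reflection_entry_dvd_4[OF assms(3,4,9,10)] reflection_entry_dvd_4[OF assms(5,6,9,10)]
      reflection_entry_dvd_4[OF assms(7,8,9,10)]
    by (simp add: zvec_in_Ztau_lattice_dvd[where m = 2, simplified])
qed

lemma golden_zvec_in_Delta3:
  fixes s1 s2 s3 :: int
  assumes "s1 \<in> {-1, 1}" "s2 \<in> {-1, 1}" "s3 \<in> {-1, 1}"
  shows "zvec 1 s1 0 s2 (- s2) 0 s3 \<in> Delta3" "zvec 1 s1 0 0 s2 s3 (- s3) \<in> Delta3'"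
proof -
  have signs: "{of_int s1, of_int s2, of_int s3} \<subseteq> {-1, 1::real}" using assms by auto
  have id_even: "evenperm (id :: 4 \<Rightarrow> 4)" by simp
  have "zvec 1 s1 0 s2 (- s2) 0 s3 =
      (\<chi> j. (vector [0, of_int s1 / 2, of_int s2 * tau' / 2, of_int s3 * tau / 2] :: real^4) $ id j)"
    by (simp add: vec_eq_4 ztau_def tau'_eq algebra_simps)
  then have "zvec 1 s1 0 s2 (- s2) 0 s3 \<in> Delta"
    unfolding Delta_def by (simp only: golden_in_Delta_gen[OF permutes_id id_even signs])
  then show "zvec 1 s1 0 s2 (- s2) 0 s3 \<in> Delta3" by (simp add: Delta3_def zvec_in_V)
  have "zvec 1 s1 0 0 s2 s3 (- s3) =
      (\<chi> j. (vector [0, of_int s1 / 2, of_int s2 * tau / 2, of_int s3 * tau' / 2] :: real^4) $ id j)"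
    by (simp add: vec_eq_4 ztau_def tau'_eq algebra_simps)
  then have "zvec 1 s1 0 0 s2 s3 (- s3) \<in> Delta'"
    unfolding Delta'_def by (simp only: golden_in_Delta_gen[OF permutes_id id_even signs])
  then show "zvec 1 s1 0 0 s2 s3 (- s3) \<in> Delta3'" by (simp add: Delta3'_def zvec_in_V)
qed

text \<open>Here \<open>c = (1, \<tau>', \<tau>)\<close> and \<open>X + Y \<tau> = (y \<bullet> c) / 2 - \<lambda>\<close>.  Setting \<open>e\<^sub>j = 1\<close> flips the sign
  of \<open>c\<^sub>j\<close>, which changes \<open>(y \<bullet> c) / 2\<close> by \<open>- y\<^sub>j c\<^sub>j \<equiv> \<lambda> c\<^sub>j\<^sup>2 (mod 2)\<close>, that is by \<open>\<lambda>\<close>,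
  \<open>\<lambda> \<tau>\<close> or \<open>\<lambda> \<tau>\<^sup>2\<close>: the three non-zero residues.  So one of the four sign choices achieves
  \<open>y \<bullet> c \<equiv> 2 \<lambda> (mod 4)\<close>.  The next lemma is the same argument for \<open>c = (1, \<tau>, \<tau>')\<close>.\<close>
lemma Delta3_root_lowers_level:
  fixes a2 b2 a3 b3 a4 b4 :: int
  assumes nonzero: "odd a2 \<or> odd b2"
    and pattern: "even (a3 - a2 - b2)" "even (b3 - a2)" "even (a4 - b2)" "even (b4 - a2 - b2)"
  shows "\<exists>r\<in>Delta3. refl r (zvec (Suc k) a2 b2 a3 b3 a4 b4) \<in> Ztau_lattice k"
proof -
  obtain X Y where X: "a2 + (a3 - b3) + b4 - 2 * a2 = 2 * X" and Y: "b2 - a3 + (a4 + b4) - 2 * b2 = 2 * Y"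
  proof -
    have "even (a2 + (a3 - b3) + b4 - 2 * a2)" "even (b2 - a3 + (a4 + b4) - 2 * b2)"
      using pattern by auto
    then show thesis using that by (elim evenE)
  qed
  have flip: "\<exists>r\<in>Delta3. refl r (zvec (Suc k) a2 b2 a3 b3 a4 b4) \<in> Ztau_lattice k"
    if e: "e1 \<in> {0, 1}" "e2 \<in> {0, 1}" "e3 \<in> {0, 1}"
      and XY: "even (X - (e1 * a2 + e2 * (a3 - b3) + e3 * b4))" "even (Y - (e1 * b2 - e2 * a3 + e3 * (a4 + b4)))"
    for e1 e2 e3 :: int
  proof
    let ?s1 = "1 - 2 * e1" and ?s2 = "1 - 2 * e2" and ?s3 = "1 - 2 * e3"
    show "zvec 1 ?s1 0 ?s2 (- ?s2) 0 ?s3 \<in> Delta3"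
      using e by (intro golden_zvec_in_Delta3) auto
    obtain u v where "X - (e1 * a2 + e2 * (a3 - b3) + e3 * b4) = 2 * u"
      "Y - (e1 * b2 - e2 * a3 + e3 * (a4 + b4)) = 2 * v"
      using XY by (elim evenE)
    with X Y have "a2 * ?s1 + b2 * 0 + a3 * ?s2 + b3 * - ?s2 + a4 * 0 + b4 * ?s3 - 2 * a2 = 4 * u"
      "a2 * 0 + b2 * ?s1 + b2 * 0 + a3 * - ?s2 + b3 * ?s2 + b3 * - ?s2 + a4 * ?s3 + b4 * 0 + b4 * ?s3 - 2 * b2 = 4 * v"
      by algebra+
    then show "refl (zvec 1 ?s1 0 ?s2 (- ?s2) 0 ?s3) (zvec (Suc k) a2 b2 a3 b3 a4 b4) \<in> Ztau_lattice k"
      by (intro refl_zvec_lowers_level[where la = a2 and lb = b2]) (use pattern in auto)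
  qed
  have "even X \<and> even Y \<or> even (X - a2) \<and> even (Y - b2) \<or> even (X - (a3 - b3)) \<and> even (Y + a3)
      \<or> even (X - b4) \<and> even (Y - (a4 + b4))"
    using nonzero pattern by auto
  then show ?thesis
    using flip[of 0 0 0] flip[of 1 0 0] flip[of 0 1 0] flip[of 0 0 1] by auto
qed

lemma Delta3'_root_lowers_level:
  fixes a2 b2 a3 b3 a4 b4 :: int
  assumes nonzero: "odd a2 \<or> odd b2"
    and pattern: "even (a3 - b2)" "even (b3 - a2 - b2)" "even (a4 - a2 - b2)" "even (b4 - a2)"
  shows "\<exists>r\<in>Delta3'. refl r (zvec (Suc k) a2 b2 a3 b3 a4 b4) \<in> Ztau_lattice k"
proof -
  obtain X Y where X: "a2 + b3 + (a4 - b4) - 2 * a2 = 2 * X" and Y: "b2 + (a3 + b3) - a4 - 2 * b2 = 2 * Y"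
  proof -
    have "even (a2 + b3 + (a4 - b4) - 2 * a2)" "even (b2 + (a3 + b3) - a4 - 2 * b2)"
      using pattern by auto
    then show thesis using that by (elim evenE)
  qed
  have flip: "\<exists>r\<in>Delta3'. refl r (zvec (Suc k) a2 b2 a3 b3 a4 b4) \<in> Ztau_lattice k"
    if e: "e1 \<in> {0, 1}" "e2 \<in> {0, 1}" "e3 \<in> {0, 1}"
      and XY: "even (X - (e1 * a2 + e2 * b3 + e3 * (a4 - b4)))" "even (Y - (e1 * b2 + e2 * (a3 + b3) - e3 * a4))"
    for e1 e2 e3 :: int
  proof
    let ?s1 = "1 - 2 * e1" and ?s2 = "1 - 2 * e2" and ?s3 = "1 - 2 * e3"
    show "zvec 1 ?s1 0 0 ?s2 ?s3 (- ?s3) \<in> Delta3'"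
      using e by (intro golden_zvec_in_Delta3) auto
    obtain u v where "X - (e1 * a2 + e2 * b3 + e3 * (a4 - b4)) = 2 * u"
      "Y - (e1 * b2 + e2 * (a3 + b3) - e3 * a4) = 2 * v"
      using XY by (elim evenE)
    with X Y have "a2 * ?s1 + b2 * 0 + a3 * 0 + b3 * ?s2 + a4 * ?s3 + b4 * - ?s3 - 2 * a2 = 4 * u"
      "a2 * 0 + b2 * ?s1 + b2 * 0 + a3 * ?s2 + b3 * 0 + b3 * ?s2 + a4 * - ?s3 + b4 * ?s3 + b4 * - ?s3 - 2 * b2 = 4 * v"
      by algebra+
    then show "refl (zvec 1 ?s1 0 0 ?s2 ?s3 (- ?s3)) (zvec (Suc k) a2 b2 a3 b3 a4 b4) \<in> Ztau_lattice k"
      by (intro refl_zvec_lowers_level[where la = a2 and lb = b2]) (use pattern in auto)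
  qed
  have "even X \<and> even Y \<or> even (X - a2) \<and> even (Y - b2) \<or> even (X - b3) \<and> even (Y - (a3 + b3))
      \<or> even (X - (a4 - b4)) \<and> even (Y + a4)"
    using nonzero pattern by auto
  then show ?thesis
    using flip[of 0 0 0] flip[of 1 0 0] flip[of 0 1 0] flip[of 0 0 1] by auto
qed

lemma exists_root_lowering_level:
  assumes "x \<in> V" "x \<bullet> x = 1" "x \<in> Ztau_lattice (Suc k)" "x \<notin> Ztau_lattice k"
  shows "\<exists>r\<in>Delta3 \<union> Delta3'. refl r x \<in> Ztau_lattice k"
proof -
  obtain a2 b2 a3 b3 a4 b4 where x: "x = zvec (Suc k) a2 b2 a3 b3 a4 b4"
    using assms(1,3) by (rule V_Ztau_lattice_zvec)
  have "ztau (a2 * a2 + b2 * b2 + a3 * a3 + b3 * b3 + a4 * a4 + b4 * b4)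
      (2 * a2 * b2 + b2 * b2 + 2 * a3 * b3 + b3 * b3 + 2 * a4 * b4 + b4 * b4) = ztau (4 ^ Suc k) 0"
    using assms(2) unfolding x zvec_inner_self by (simp add: ztau_def)
  then have "4 dvd a2 * a2 + b2 * b2 + a3 * a3 + b3 * b3 + a4 * a4 + b4 * b4"
    "4 dvd 2 * a2 * b2 + b2 * b2 + 2 * a3 * b3 + b3 * b3 + 2 * a4 * b4 + b4 * b4"
    unfolding ztau_eq_iff by simp_all
  moreover have "\<not> (even a2 \<and> even b2 \<and> even a3 \<and> even b3 \<and> even a4 \<and> even b4)"
    using assms(4) zvec_in_Ztau_lattice_dvd[where m = 1] unfolding x by auto
  ultimately have "(odd a2 \<or> odd b2) \<and>
    (even (a3 - a2 - b2) \<and> even (b3 - a2) \<and> even (a4 - b2) \<and> even (b4 - a2 - b2) \<or>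
     even (a3 - b2) \<and> even (b3 - a2 - b2) \<and> even (a4 - a2 - b2) \<and> even (b4 - a2))"
    by (rule norm_dvd_4_residues_mod_2)
  then show ?thesis
    unfolding x using Delta3_root_lowers_level[of a2 b2 a3 b3 a4 b4 k]
      Delta3'_root_lowers_level[of a2 b2 a3 b3 a4 b4 k] by blast
qed

lemma int_square_ge_1: "(x::int) \<noteq> 0 \<Longrightarrow> 1 \<le> x * x"
proof -
  assume "x \<noteq> 0"
  then have "0 < x * x" by (auto simp: zero_less_mult_iff linorder_neq_iff)
  then show ?thesis by linarith
qed

lemma trace_square_ge_3:
  fixes a b :: int
  assumes "b \<noteq> 0"
  shows "3 \<le> (a + b) * (a + b) + a * a + 2 * (b * b)"
proof -
  have "1 \<le> (a + b) * (a + b) + a * a"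
  proof (cases "a = 0")
    case True
    then show ?thesis using int_square_ge_1[OF assms] by simp
  next
    case False
    then show ?thesis using int_square_ge_1[of a] zero_le_square[of "a + b"] by linarith
  qed
  then show ?thesis using int_square_ge_1[OF assms] by linarith
qed

text \<open>The trace of \<open>(a + b \<tau>)\<^sup>2\<close> is \<open>(a + b)\<^sup>2 + a\<^sup>2 + 2 b\<^sup>2\<close>; summed over the coordinates it is
  the trace \<open>2\<close> of the norm \<open>1\<close>, so no \<open>b\<^sub>j\<close> can be non-zero.\<close>
lemma unit_zvec_level_0:
  assumes "zvec 0 a2 b2 a3 b3 a4 b4 \<bullet> zvec 0 a2 b2 a3 b3 a4 b4 = 1"
  shows "b2 = 0 \<and> b3 = 0 \<and> b4 = 0 \<and> a2 * a2 + a3 * a3 + a4 * a4 = 1"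
proof -
  have "ztau (a2 * a2 + b2 * b2 + a3 * a3 + b3 * b3 + a4 * a4 + b4 * b4)
      (2 * a2 * b2 + b2 * b2 + 2 * a3 * b3 + b3 * b3 + 2 * a4 * b4 + b4 * b4) = ztau 1 0"
    using assms unfolding zvec_inner_self by (simp add: ztau_def)
  then have norm: "a2 * a2 + b2 * b2 + a3 * a3 + b3 * b3 + a4 * a4 + b4 * b4 = 1"
    "2 * a2 * b2 + b2 * b2 + 2 * a3 * b3 + b3 * b3 + 2 * a4 * b4 + b4 * b4 = 0"
    unfolding ztau_eq_iff by simp_all
  define q :: "int \<Rightarrow> int \<Rightarrow> int" where "q a b = (a + b) * (a + b) + a * a + 2 * (b * b)" for a b
  have "q a2 b2 + q a3 b3 + q a4 b4 = 2"
    using norm unfolding q_def by (simp add: algebra_simps)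
  moreover have q_nonneg: "0 \<le> q a b" for a b
    unfolding q_def by simp
  moreover have q_ge_3: "3 \<le> q a b" if "b \<noteq> 0" for a b
    unfolding q_def using that by (rule trace_square_ge_3)
  ultimately have "b2 = 0" "b3 = 0" "b4 = 0"
    using q_nonneg[of a2 b2] q_nonneg[of a3 b3] q_nonneg[of a4 b4]
      q_ge_3[where a = a2 and b = b2] q_ge_3[where a = a3 and b = b3] q_ge_3[where a = a4 and b = b4]
    by linarith+
  with norm show ?thesis by simp
qed

section \<open>\<open>Sigma[3]\<close> and the stabiliser of \<open>e\<^sub>1\<close>\<close>

lemma Delta3_subset: "Delta3 \<union> Delta3' \<subseteq> Delta \<union> Delta'"
  unfolding Delta3_def Delta3'_def by blast

lemma Delta3_unit: "a \<in> Delta3 \<union> Delta3' \<Longrightarrow> a \<bullet> a = 1"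
  using Delta3_subset root_unit by blast

lemma Hinf3_subset_Hinf: "Hinf3 \<subseteq> Hinf"
  unfolding Hinf3_def Hinf_def using refl_group_mono Delta3_subset by blast

lemma Hinf3_preserves_V:
  assumes "h \<in> Hinf3" "x \<in> V"
  shows "h x \<in> V"
  by (rule refl_group_preserves[OF Delta3_unit assms(1)[unfolded Hinf3_def] _ assms(2)])
    (auto simp: V_def Delta3_def Delta3'_def refl_nth)

lemma Hinf3_fixes_e1:
  assumes "h \<in> Hinf3"
  shows "h (axis 1 1) = axis 1 1"
proof -
  have "h (axis 1 1) \<in> {axis 1 1}"
    by (rule refl_group_preserves[OF Delta3_unit assms[unfolded Hinf3_def]])
      (auto simp: refl_orthogonal inner_axis' V_def Delta3_def Delta3'_def)
  then show ?thesis by simp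
qed

abbreviation e2_orbit :: "(real^4) set" where
  "e2_orbit \<equiv> (\<lambda>h. h (axis 2 1)) ` Hinf3"

lemma axis_zvec:
  "axis 2 1 = zvec 0 1 0 0 0 0 0" "axis 3 1 = zvec 0 0 0 1 0 0 0" "axis 4 1 = zvec 0 0 0 0 0 1 0"
  by (simp_all add: vec_eq_4 ztau_def axis_def)

lemma e2_orbit_refl: "x \<in> e2_orbit \<Longrightarrow> a \<in> Delta3 \<union> Delta3' \<Longrightarrow> refl a x \<in> e2_orbit"
  unfolding Hinf3_def by (rule refl_orbit_closed)

lemma axis_in_Delta3: "j \<in> {2, 3, 4} \<Longrightarrow> axis j 1 \<in> Delta3"
  using axis_in_Delta_gen[of 1 j tau tau'] by (auto simp: Delta3_def Delta_def V_def axis_def)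

lemma axis_in_e2_orbit:
  assumes "j \<in> {2, 3, 4}" "s \<in> {-1, 1}"
  shows "axis j s \<in> e2_orbit"
proof -
  have e2: "axis 2 1 \<in> e2_orbit"
    unfolding Hinf3_def by (rule image_eqI[where x = id]) (simp_all add: rg_id)
  have roots: "zvec 1 s1 0 0 s2 s3 (- s3) \<in> Delta3 \<union> Delta3'"
    if "s1 \<in> {-1, 1}" "s2 \<in> {-1, 1}" "s3 \<in> {-1, 1}" for s1 s2 s3 :: int
    using golden_zvec_in_Delta3(2)[OF that] by blast
  have chains: "refl (zvec 1 (-1) 0 0 1 1 (-1)) (refl (zvec 1 (-1) 0 0 (-1) 1 (-1))
        (refl (zvec 1 1 0 0 1 1 (-1)) (axis 2 1))) = axis 3 1"
    "refl (zvec 1 (-1) 0 0 1 1 (-1)) (refl (zvec 1 (-1) 0 0 1 (-1) 1)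
        (refl (zvec 1 1 0 0 1 1 (-1)) (axis 2 1))) = axis 4 1"
    unfolding axis_zvec by (simp_all add: refl_zvec[OF refl refl] vec_eq_4 ztau_def del: One_nat_def)
  have "axis 3 1 \<in> e2_orbit" "axis 4 1 \<in> e2_orbit"
    using roots[of "-1" 1 "-1"] unfolding chains[symmetric] by (intro e2_orbit_refl e2 roots; simp)+
  with e2 assms(1) have pos: "axis j 1 \<in> e2_orbit" by auto
  have unit: "axis j 1 \<bullet> (axis j 1 :: real^4) = 1" by (simp add: inner_axis_axis)
  have "refl (axis j 1) (axis j 1) = axis j (-1)"
    unfolding refl_self[OF unit] by (simp add: vec_eq_iff axis_def)
  moreover have "axis j 1 \<in> Delta3 \<union> Delta3'"
    using axis_in_Delta3[OF assms(1)] by blast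
  ultimately have "axis j (-1) \<in> e2_orbit" using e2_orbit_refl[OF pos] by metis
  with pos assms(2) show ?thesis by auto
qed

lemma level_0_in_e2_orbit:
  assumes "x \<in> V" "x \<bullet> x = 1" "x \<in> Ztau_lattice 0"
  shows "x \<in> e2_orbit"
proof -
  obtain a2 b2 a3 b3 a4 b4 where x: "x = zvec 0 a2 b2 a3 b3 a4 b4"
    using assms(1,3) by (rule V_Ztau_lattice_zvec)
  with assms(2) have b: "b2 = 0" "b3 = 0" "b4 = 0" and a: "a2 * a2 + a3 * a3 + a4 * a4 = 1"
    using unit_zvec_level_0 by blast+
  have small: "a \<in> {-1, 0, 1}" if "a * a \<le> 1" for a :: int
  proof -
    have "\<bar>a\<bar> \<le> 1" using that abs_square_le_1[of a] by (simp add: power2_eq_square)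
    then show ?thesis by auto
  qed
  have "a2 * a2 \<le> 1" "a3 * a3 \<le> 1" "a4 * a4 \<le> 1"
    using a zero_le_square[of a2] zero_le_square[of a3] zero_le_square[of a4] by linarith+
  with a have "a2 \<in> {-1, 1} \<and> a3 = 0 \<and> a4 = 0 \<or> a2 = 0 \<and> a3 \<in> {-1, 1} \<and> a4 = 0
      \<or> a2 = 0 \<and> a3 = 0 \<and> a4 \<in> {-1, 1}"
    using small[of a2] small[of a3] small[of a4] by auto
  then have "\<exists>j\<in>{2, 3, 4}. \<exists>s\<in>{-1, 1::int}. x = axis j (of_int s)"
    unfolding x b by (elim disjE conjE) (auto simp: vec_eq_4 ztau_def axis_def)
  then show ?thesis by (auto intro: axis_in_e2_orbit)
qed

lemma V_unit_in_e2_orbit: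
  assumes "x \<in> V" "x \<bullet> x = 1" "x \<in> Ztau_lattice k"
  shows "x \<in> e2_orbit"
  using assms
proof (induction k arbitrary: x)
  case 0
  then show ?case by (rule level_0_in_e2_orbit)
next
  case (Suc k)
  show ?case
  proof (cases "x \<in> Ztau_lattice k")
    case True
    with Suc show ?thesis by blast
  next
    case False
    with Suc.prems obtain r where r: "r \<in> Delta3 \<union> Delta3'" "refl r x \<in> Ztau_lattice k"
      using exists_root_lowering_level by blast
    have "refl r x \<in> V"
      using Suc.prems(1) r(1) by (auto simp: V_def Delta3_def Delta3'_def refl_nth)
    moreover have "refl r x \<bullet> refl r x = 1"
      using Suc.prems(2) by (simp add: inner_refl Delta3_unit[OF r(1)])
    ultimately have "refl r (refl r x) \<in> e2_orbit"
      using Suc.IH r by (blast intro: e2_orbit_refl)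
    then show ?thesis by (simp add: refl_involution Delta3_unit[OF r(1)])
  qed
qed

lemma Sigma3_eq_e2_orbit: "Sigma3 = e2_orbit"
  and Sigma_inter_V: "{x \<in> Sigma. x $ 1 = 0} = Sigma3"
proof -
  have "h a \<in> Sigma \<and> h a $ 1 = 0" if "h \<in> Hinf3" "a \<in> Delta3 \<union> Delta3'" for h a
    using that Hinf3_subset_Hinf Delta3_subset Hinf3_preserves_V[of h a]
    by (auto simp: Sigma_def V_def Delta3_def Delta3'_def)
  then have "Sigma3 \<subseteq> {x \<in> Sigma. x $ 1 = 0}"
    unfolding Sigma3_def by blast
  moreover have "e2_orbit \<subseteq> Sigma3"
    unfolding Sigma3_def using axis_in_Delta3[of 2] by blast
  moreover have "{x \<in> Sigma. x $ 1 = 0} \<subseteq> e2_orbit"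
  proof safe
    fix x assume "x \<in> Sigma" "x $ 1 = 0"
    then show "x \<in> e2_orbit"
      using Sigma_unit_dyadic[of x] V_unit_in_e2_orbit[of x] by (auto simp: V_def)
  qed
  ultimately show "Sigma3 = e2_orbit" "{x \<in> Sigma. x $ 1 = 0} = Sigma3" by blast+
qed

lemma Sigma_orthogonal_eq:
  assumes "g \<in> Hinf"
  shows "{\<beta> \<in> Sigma. \<beta> \<bullet> g (axis 1 1) = 0} = g ` Sigma3"
proof -
  have g: "bij g" "inv g \<in> Hinf" using Hinf_inv[OF assms] by simp_all
  have "\<beta> \<in> g ` {x \<in> Sigma. x $ 1 = 0}" if "\<beta> \<in> Sigma" "\<beta> \<bullet> g (axis 1 1) = 0" for \<beta>
  proof
    show "\<beta> = g (inv g \<beta>)" using g(1) by (simp add: surj_f_inv_f bij_is_surj)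
    have "inv g \<beta> $ 1 = g (inv g \<beta>) \<bullet> g (axis 1 1)" by (simp add: Hinf_inner[OF assms] inner_axis)
    then show "inv g \<beta> \<in> {x \<in> Sigma. x $ 1 = 0}"
      using that g by (simp add: Sigma_Hinf_closed surj_f_inv_f bij_is_surj)
  qed
  moreover have "g x \<in> Sigma" "g x \<bullet> g (axis 1 1) = 0" if "x \<in> Sigma" "x $ 1 = 0" for x
    using that by (simp_all add: Sigma_Hinf_closed assms Hinf_inner inner_axis)
  ultimately show ?thesis unfolding Sigma_inter_V[symmetric] by blast
qed

lemma conjugate_Hinf3_fixes:
  assumes "g \<in> Hinf" "h \<in> Hinf3"
  shows "g \<circ> h \<circ> inv g \<in> Hinf" "(g \<circ> h \<circ> inv g) (g (axis 1 1)) = g (axis 1 1)"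
proof -
  have g: "bij g" "inv g \<in> Hinf" using Hinf_inv[OF assms(1)] by simp_all
  show "g \<circ> h \<circ> inv g \<in> Hinf"
    using assms Hinf3_subset_Hinf g(2) by (blast intro: Hinf_comp)
  show "(g \<circ> h \<circ> inv g) (g (axis 1 1)) = g (axis 1 1)"
    using g(1) Hinf3_fixes_e1[OF assms(2)] by (simp add: bij_is_inj)
qed

theorem mainTheorem10:
  shows "(\<forall>\<alpha>\<in>Sigma. \<forall>\<beta>\<in>Sigma. \<exists>g\<in>Hinf. g \<alpha> = \<beta>)
    \<and> (\<forall>\<alpha>\<in>Sigma3. \<forall>\<beta>\<in>Sigma3. \<exists>g\<in>Hinf3. g \<alpha> = \<beta>)
    \<and> (\<forall>\<alpha>\<in>Sigma. \<exists>g\<in>Hinf. {\<beta>\<in>Sigma. \<beta> \<bullet> \<alpha> = 0} = g ` Sigma3)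
    \<and> (\<forall>\<alpha>\<in>Sigma. \<exists>g\<in>Hinf. \<forall>h\<in>Hinf3.
          g \<circ> h \<circ> inv g \<in> Hinf \<and> (g \<circ> h \<circ> inv g) \<alpha> = \<alpha>)"
proof (intro conjI ballI)
  fix \<alpha> \<beta> assume "\<alpha> \<in> Sigma" "\<beta> \<in> Sigma"
  then show "\<exists>g\<in>Hinf. g \<alpha> = \<beta>"
    using refl_group_transitive[OF root_unit] unfolding Sigma_eq_e1_orbit Hinf_def by blast
next
  fix \<alpha> \<beta> assume "\<alpha> \<in> Sigma3" "\<beta> \<in> Sigma3"
  then show "\<exists>g\<in>Hinf3. g \<alpha> = \<beta>"
    using refl_group_transitive[OF Delta3_unit] unfolding Sigma3_eq_e2_orbit Hinf3_def by blast
next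
  fix \<alpha> assume "\<alpha> \<in> Sigma"
  then obtain g where "g \<in> Hinf" "\<alpha> = g (axis 1 1)" unfolding Sigma_eq_e1_orbit by blast
  then show "\<exists>g\<in>Hinf. {\<beta>\<in>Sigma. \<beta> \<bullet> \<alpha> = 0} = g ` Sigma3"
    using Sigma_orthogonal_eq by blast
next
  fix \<alpha> assume "\<alpha> \<in> Sigma"
  then obtain g where "g \<in> Hinf" "\<alpha> = g (axis 1 1)" unfolding Sigma_eq_e1_orbit by blast
  then show "\<exists>g\<in>Hinf. \<forall>h\<in>Hinf3. g \<circ> h \<circ> inv g \<in> Hinf \<and> (g \<circ> h \<circ> inv g) \<alpha> = \<alpha>"
    using conjugate_Hinf3_fixes by blast
qed

end
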